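(* Let $M$ be an $8$-dimensional Riemannian manifold, $\xi$ a complex line bundle over $M$ with Hermitian connection, $\eta$ a rank two real oriented Euclidean vector bundle over $M$ with Euclidean connection $\nabla^\eta$, and $a,b$ integers. Set $A=(\xi^{\otimes a})_{\mathbf R}\otimes\mathbf C$, $B=(\xi^{\otimes b})_{\mathbf R}\otimes\mathbf C$, $X=p_{1}(TM)-(a^{2}+2b^{2})p_{1}(\xi_{\mathbf{R}})$, $\Psi=2\cosh(\frac{b}{2}c)\cosh(\frac{1}{2}\overline{c})\widehat{A}(TM,\nabla^{TM})$, and \begin{align*} \overline{B_{0}^{1}}&=1,\qquad \overline{B_{1}^{1}}=-A+B+3\eta_{\mathbf{C}}-6,\\ \overline{B_{2}^{1}}&=\wedge^{2}(A)+\wedge^{2}(B)-A\otimes B-3A\otimes\eta_{\mathbf{C}}+3B\otimes\eta_{\mathbf{C}}+4\eta_{\mathbf{C}}\otimes\eta_{\mathbf{C}}+S^{2}(\eta_{\mathbf{C}})+T_{\mathbf{C}}M+6A-5B-17\eta_{\mathbf{C}}+7. \end{align*} Then \begin{align*} X\Big\{\frac{e^{\frac{1}{24}X}+1}{X}\,\Psi\,\mathrm{ch}\big(240\overline{B_{0}^{1}}+8\overline{B_{1}^{1}}-\overline{B_{2}^{1}}\big)+e^{\frac{1}{24}X}\,\Psi\,\mathrm{ch}(\overline{B_{0}^{1}})\Big\}^{(4)}=\Big\{\Psi\,\mathrm{ch}\big(240\overline{B_{0}^{1}}+8\overline{B_{1}^{1}}-\overline{B_{2}^{1}}\big)\Big\}^{(8)}.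 \end{align*}
   Context: $M$ is a Riemannian manifold with Levi-Civita connection $\nabla^{TM}$ and curvature $R^{TM}$; $T_{\mathbf C}M=TM\otimes\mathbf C$. $\widehat{A}(TM,\nabla^{TM})=\det^{1/2}\Big(\frac{\frac{\sqrt{-1}}{4\pi}R^{TM}}{\sinh(\frac{\sqrt{-1}}{4\pi}R^{TM})}\Big)$. For a Hermitian bundle $E$ with Hermitian connection, $\mathrm{ch}(E)=\mathrm{tr}[\exp(\frac{\sqrt{-1}}{2\pi}(\nabla^E)^2)]$, extended additively to formal $\mathbf Z$-linear combinations (an integer $N$ stands for the trivial bundle $\mathbf C^N$, $\mathrm{ch}(N)=N$); tensor products, exterior powers $\wedge^i$ and symmetric powers $S^i$ carry induced connections. $\{\omega\}^{(j)}$ is the degree-$j$ component of a form $\omega$. For an integer $m$, $(\xi^{\otimes m})_{\mathbf R}$ is the underlying rank two real oriented Euclidean bundle of $\xi^{\otimes m}$ (with $\xi^{\otimes m}$ for $m<0$ meaning $(\xi^* )^{\otimes |m|}$), with induced connection; $c=2\pi\sqrt{-1}u$ is the 2-form such that $\pm c$ are the formal Chern roots of $\xi_{\mathbf R}\otimes\mathbf C$, so $\pm mc$ are those of $(\xi^{\otimes m})_{\mathbf R}\otimes\mathbf C$. $\eta_{\mathbf C}=\eta\otimes\mathbf C$ and $\overline{c}=2\pi\sqrt{-1}\overline{u}$ is the 2-form such that $\pm\overline{c}$ are the formal Chern roots of $\eta_{\mathbf C}$. $p_1$ denotes the first Pontryagin form; in terms of formal Chern roots $\{\pm 2\pi\sqrt{-1}x_j\}$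 of $T_{\mathbf C}M$, $p_1(TM)=\sum_j(2\pi\sqrt{-1}x_j)^2$ and $p_1(\xi_{\mathbf R})=c^2$. Functions of $c,\overline c$ and $X$ are power series; the expression $X\{\frac{e^{X/24}+1}{X}F\}^{(4)}$ is understood formally, expanding $\frac{e^{X/24}+1}{X}=\frac{2}{X}+\frac1{24}+\frac{X}{1152}+\cdots$ with $X^{-1}$ a formal symbol of degree $-4$ satisfying $X\cdot X^{-1}=1$. *)

theory Defs
  imports "HOL-Computational_Algebra.Formal_Power_Series"
begin

text \<open>
Splitting-principle model of the algebra of characteristic forms.
Every characteristic form occurring in the statement is a power series in the
formal Chern roots (2-forms).  We encode such a form as a real formal power series
in a grading variable t: each formal Chern root r (a 2-form) is replaced by r*t,
so the degree-2k component of a form is the coefficient of t^k.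
A list of reals rs stands for the list of formal Chern roots of a complex bundle.
\<close>

definition ch_roots :: "real list \<Rightarrow> real fps" where
  "ch_roots rs = (\<Sum>r\<leftarrow>rs. fps_exp r)"

definition ch_wedge2 :: "real list \<Rightarrow> real fps" where
  "ch_wedge2 rs = (\<Sum>j<length rs. \<Sum>i<j. fps_exp (rs!i + rs!j))"

definition ch_sym2 :: "real list \<Rightarrow> real fps" where
  "ch_sym2 rs = (\<Sum>j<length rs. \<Sum>i\<le>j. fps_exp (rs!i + rs!j))"

text \<open>The power series sinh(s)/s evaluated at the root s (scaled by t).\<close>
definition fps_sinhc :: "real \<Rightarrow> real fps" where
  "fps_sinhc s = Abs_fps (\<lambda>n. if even n then s ^ n / fact (n + 1) else 0)"

definition fps_cosh :: "real \<Rightarrow> real fps" where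
  "fps_cosh s = (fps_exp s + fps_exp (- s)) / 2"

text \<open>A-hat form of TM, where \<open>\<plusminus>y_j\<close> are the formal Chern roots of T_C M
  (so det^(1/2) contributes one factor (y_j/2)/sinh(y_j/2) per pair).\<close>
definition Ahat :: "real list \<Rightarrow> real fps" where
  "Ahat ys = (\<Prod>y\<leftarrow>ys. inverse (fps_sinhc (y / 2)))"

definition roots_TCM :: "real list \<Rightarrow> real list" where
  "roots_TCM ys = ys @ map uminus ys"

definition roots_xiR :: "int \<Rightarrow> real \<Rightarrow> real list" where
  "roots_xiR m c = [of_int m * c, - (of_int m * c)]"

definition roots_etaC :: "real \<Rightarrow> real list" where
  "roots_etaC cb = [cb, - cb]"

definition form_deg :: "real fps \<Rightarrow> nat \<Rightarrow> real fps" where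
  "form_deg \<omega> j = (if even j then fps_const (fps_nth \<omega> (j div 2)) * fps_X ^ (j div 2) else 0)"

definition p1_TM :: "real list \<Rightarrow> real fps" where
  "p1_TM ys = fps_const (\<Sum>y\<leftarrow>ys. y ^ 2) * fps_X ^ 2"

definition p1_xiR :: "real \<Rightarrow> real fps" where
  "p1_xiR c = fps_const (c ^ 2) * fps_X ^ 2"

text \<open>
Formal meaning of  X { (e^(X/24)+1)/X * F }^(4)  for a degree-4 form X:
expanding (e^(X/24)+1)/X = 2 X^(-1) + H(X) with H(X) = sum_(n\<ge>1) X^(n-1)/(24^n n!),
and X^(-1) a formal symbol of degree -4 with X X^(-1) = 1, we get
X {2 X^(-1) F}^(4) = 2 X X^(-1) {F}^(8) = 2 {F}^(8), hence the value below.
\<close>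
definition H_series :: "real fps" where
  "H_series = Abs_fps (\<lambda>n. 1 / (24 ^ (n + 1) * fact (n + 1)))"

definition X_deg4_expX1_over_X :: "real fps \<Rightarrow> real fps \<Rightarrow> real fps" where
  "X_deg4_expX1_over_X X F =
     form_deg (2 * F) 8 + X * form_deg (fps_compose H_series X * F) 4"

definition fps_expX24 :: "real fps \<Rightarrow> real fps" where
  "fps_expX24 X = fps_compose (fps_exp (1 / 24)) X"

end

theory Submission
  imports Defs
begin

text \<open>
  Only the coefficients of t^0, t^2, t^4 (forms of degree 0, 4, 8) enter, and every series
  involved is even.  Since X = x t^2 is a single monomial, the formal term
  X {(e^(X/24) + 1)/X F}^(4) equals 2 {F}^(8) + x (F_2/24 + x F_0/1152) t^4, so the theorem
  becomes a polynomial identity between the coefficients of degree 0, 2, 4 of Psi, read off from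
  the Taylor series of cosh and (s/2)/sinh(s/2), and those of ch(240 B_0 + 8 B_1 - B_2).  By the
  splitting principle the latter is an integral combination of characters e^r + e^(-r) of plane
  bundles; its constant term is 248 - rank T_C M, which is 240 exactly in dimension 8.
\<close>

unbundle fps_syntax

definition even_fps :: "'a::comm_ring_1 fps \<Rightarrow> bool" where
  "even_fps f \<longleftrightarrow> (\<forall>n. odd n \<longrightarrow> f $ n = 0)"

lemma even_fps_mult_nth_2:
  assumes "even_fps f"
  shows "(f * g) $ 2 = f $ 0 * g $ 2 + f $ 2 * g $ 0"
  using assms by (simp add: even_fps_def fps_mult_nth numeral_eq_Suc atLeast0AtMost)

lemma even_fps_mult_nth_4:
  assumes "even_fps f"
  shows "(f * g) $ 4 = f $ 0 * g $ 4 + f $ 2 * g $ 2 + f $ 4 * g $ 0"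
proof -
  have "f $ 1 = 0" "f $ 3 = 0"
    using assms by (simp_all add: even_fps_def)
  then show ?thesis
    by (simp add: fps_mult_nth numeral_eq_Suc atLeast0AtMost)
qed

lemma even_fps_mult [simp]:
  assumes "even_fps f" "even_fps g"
  shows "even_fps (f * g)"
  unfolding even_fps_def
proof (intro allI impI)
  fix n :: nat
  assume "odd n"
  have "f $ i * g $ (n - i) = 0" if "i \<le> n" for i
    using assms \<open>odd n\<close> that by (cases "even i") (auto simp: even_fps_def)
  then show "(f * g) $ n = 0"
    by (simp add: fps_mult_nth)
qed

lemma even_fps_numeral [simp]: "even_fps (numeral k)"
  by (simp add: even_fps_def fps_numeral_nth)

lemma even_fps_iff_compose_uminus_fps_X:
  "even_fps (f :: 'a::field_char_0 fps) \<longleftrightarrow> f oo - fps_X = f"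
proof -
  have "(-1) ^ n * f $ n = f $ n \<longleftrightarrow> odd n \<longrightarrow> f $ n = 0" for n
    by (cases "even n") auto
  then show ?thesis
    by (auto simp: even_fps_def fps_compose_uminus' fps_eq_iff)
qed

lemma even_fps_inverse:
  fixes f :: "'a::field_char_0 fps"
  assumes "even_fps f" "f $ 0 \<noteq> 0"
  shows "even_fps (inverse f)"
  using assms by (simp add: even_fps_iff_compose_uminus_fps_X fps_inverse_compose)

lemma fps_numeral_mult_nth [simp]: "(numeral k * f) $ n = numeral k * f $ n"
  by (simp add: numeral_fps_const)

lemma fps_const_mult_fps_X_power_mult:
  "fps_const a * fps_X ^ m * (fps_const b * fps_X ^ n)
     = fps_const (a * b) * (fps_X ^ (m + n) :: 'a::comm_ring_1 fps)"
  by (simp add: algebra_simps power_add flip: fps_const_mult)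

lemma fps_compose_monomial_nth:
  fixes a :: "'a::comm_ring_1 fps"
  assumes "k > 0"
  shows "(a oo fps_const x * fps_X ^ k) $ n = (if k dvd n then x ^ (n div k) * a $ (n div k) else 0)"
proof -
  have "(a oo fps_const x * fps_X ^ k) $ n
      = (\<Sum>i=0..n. if i = n div k \<and> k dvd n then a $ i * x ^ i else 0)"
    unfolding fps_compose_nth power_mult_distrib fps_const_power
    by (intro sum.cong) (use assms in \<open>auto simp: power_mult[symmetric] mult.commute\<close>)
  also have "\<dots> = (if k dvd n then x ^ (n div k) * a $ (n div k) else 0)"
    using assms by (auto simp: sum.delta' mult.commute intro: div_le_dividend)
  finally show ?thesis .
qed

lemma even_fps_compose_monomial_2 [simp]: "even_fps (a oo fps_const x * fps_X ^ 2)"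
  by (simp add: even_fps_def fps_compose_monomial_nth)

lemma X_deg4_expX1_over_X_monomial:
  "X_deg4_expX1_over_X (fps_const x * fps_X ^ 2) F
     = fps_const (2 * F $ 4 + x * (F $ 2 / 24 + x * F $ 0 / 1152)) * fps_X ^ 4"
proof -
  let ?H = "H_series oo fps_const x * fps_X ^ 2"
  have H0: "?H $ 0 = 1 / 24" and H2: "?H $ 2 = x / 1152"
    by (simp_all add: fps_compose_monomial_nth H_series_def)
  have "(?H * F) $ 2 = F $ 2 / 24 + x * F $ 0 / 1152"
    unfolding even_fps_mult_nth_2[OF even_fps_compose_monomial_2] H0 H2 by simp
  then show ?thesis
    unfolding X_deg4_expX1_over_X_def form_deg_def fps_numeral_mult_nth
    by (simp add: fps_const_mult_fps_X_power_mult fps_eq_iff algebra_simps)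
qed

lemma monomial_mult_form_deg_4_expX24:
  "fps_const x * fps_X ^ 2 * form_deg (fps_expX24 (fps_const x * fps_X ^ 2) * P) 4
     = fps_const (x * (P $ 2 + x * P $ 0 / 24)) * fps_X ^ 4"
proof -
  let ?E = "fps_exp (1 / 24) oo fps_const x * fps_X ^ 2"
  have E0: "?E $ 0 = 1" and E2: "?E $ 2 = x / 24"
    by (simp_all add: fps_compose_monomial_nth)
  have "(?E * P) $ 2 = P $ 2 + x * P $ 0 / 24"
    unfolding even_fps_mult_nth_2[OF even_fps_compose_monomial_2] E0 E2 by simp
  then show ?thesis
    by (simp add: fps_expX24_def form_deg_def fps_const_mult_fps_X_power_mult)
qed

definition ch_plane :: "real \<Rightarrow> real fps" where
  "ch_plane r = ch_roots [r, - r]"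

lemma ch_roots_nth: "ch_roots rs $ n = (\<Sum>r\<leftarrow>rs. r ^ n) / fact n"
  by (induction rs) (simp_all add: ch_roots_def add_divide_distrib)

lemma ch_plane_nth: "ch_plane r $ n = (if even n then 2 * r ^ n / fact n else 0)"
  by (simp add: ch_plane_def ch_roots_nth)

lemma ch_plane_eq: "ch_plane r = fps_exp r + fps_exp (- r)"
  by (simp add: ch_plane_def ch_roots_def)

lemma ch_plane_mult: "ch_plane r * ch_plane s = ch_plane (r + s) + ch_plane (r - s)"
  by (simp add: ch_plane_eq algebra_simps flip: fps_exp_add_mult)

lemma ch_plane_0: "ch_plane 0 = 2"
  by (simp add: ch_plane_eq)

lemma ch_roots_roots_xiR: "ch_roots (roots_xiR m c) = ch_plane (of_int m * c)"
  by (simp add: ch_plane_def roots_xiR_def)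

lemma ch_roots_roots_etaC: "ch_roots (roots_etaC e) = ch_plane e"
  by (simp add: ch_plane_def roots_etaC_def)

lemma ch_wedge2_roots_xiR: "ch_wedge2 (roots_xiR m c) = 1"
  by (simp add: ch_wedge2_def roots_xiR_def lessThan_Suc numeral_eq_Suc)

lemma ch_sym2_roots_etaC: "ch_sym2 (roots_etaC e) = ch_plane (2 * e) + 1"
  by (simp add: ch_sym2_def roots_etaC_def ch_plane_eq lessThan_Suc atMost_Suc numeral_eq_Suc
      algebra_simps)

lemma ch_roots_roots_TCM_nth:
  "ch_roots (roots_TCM ys) $ n = (if even n then 2 * (\<Sum>y\<leftarrow>ys. y ^ n) / fact n else 0)"
  by (simp add: roots_TCM_def ch_roots_nth o_def sum_list_const_mult sum_list_addf[symmetric])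

text \<open>
  \<open>ch(240 B\<^sub>0 + 8 B\<^sub>1 - B\<^sub>2)\<close> when \<open>\<plusminus>\<alpha>, \<plusminus>\<beta>, \<plusminus>e\<close> are the Chern roots of \<open>A, B, \<eta>\<^sub>C\<close> and
  \<open>T = ch(T\<^sub>CM)\<close>; the \<open>1 + 1\<close> is \<open>ch(\<Lambda>\<^sup>2A) + ch(\<Lambda>\<^sup>2B)\<close>.
\<close>
definition ch_virtual_bundle :: "real \<Rightarrow> real \<Rightarrow> real \<Rightarrow> real fps \<Rightarrow> real fps" where
  "ch_virtual_bundle \<alpha> \<beta> e T =
     240 * 1 + 8 * (- ch_plane \<alpha> + ch_plane \<beta> + 3 * ch_plane e - 6)
     - (1 + 1 - ch_plane \<alpha> * ch_plane \<beta> - 3 * ch_plane \<alpha> * ch_plane e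
        + 3 * ch_plane \<beta> * ch_plane e + 4 * ch_plane e * ch_plane e + (ch_plane (2 * e) + 1) + T
        + 6 * ch_plane \<alpha> - 5 * ch_plane \<beta> - 17 * ch_plane e + 7)"

lemma ch_virtual_bundle_linear:
  "ch_virtual_bundle \<alpha> \<beta> e T =
     174 - 14 * ch_plane \<alpha> + 13 * ch_plane \<beta> + 41 * ch_plane e
     + ch_plane (\<alpha> + \<beta>) + ch_plane (\<alpha> - \<beta>) + 3 * ch_plane (\<alpha> + e) + 3 * ch_plane (\<alpha> - e)
     - 3 * ch_plane (\<beta> + e) - 3 * ch_plane (\<beta> - e) - 5 * ch_plane (2 * e) - T"
proof -
  have "ch_plane e * ch_plane e = ch_plane (2 * e) + 2"
    by (simp add: ch_plane_mult ch_plane_0)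
  then show ?thesis
    unfolding ch_virtual_bundle_def mult.assoc by (simp add: ch_plane_mult algebra_simps)
qed

lemma
  shows ch_virtual_bundle_nth_0: "ch_virtual_bundle \<alpha> \<beta> e T $ 0 = 248 - T $ 0"
    and ch_virtual_bundle_nth_2:
      "ch_virtual_bundle \<alpha> \<beta> e T $ 2 = - 6 * \<alpha>\<^sup>2 + 9 * \<beta>\<^sup>2 + 21 * e\<^sup>2 - T $ 2"
    and ch_virtual_bundle_nth_4: "ch_virtual_bundle \<alpha> \<beta> e T $ 4 =
      (- 6 * \<alpha> ^ 4 + 9 * \<beta> ^ 4 - 39 * e ^ 4 + 12 * \<alpha>\<^sup>2 * \<beta>\<^sup>2 + 36 * \<alpha>\<^sup>2 * e\<^sup>2
       - 36 * \<beta>\<^sup>2 * e\<^sup>2) / 12 - T $ 4"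
  unfolding ch_virtual_bundle_linear
  by (simp_all add: ch_plane_nth fps_numeral_nth fact_numeral; simp add: field_simps; algebra)+

lemma fps_cosh_nth: "fps_cosh s $ n = (if even n then s ^ n / fact n else 0)"
  by (simp add: fps_cosh_def numeral_fps_const fps_divide_unit fps_const_inverse add_divide_distrib)

lemma even_fps_cosh [simp]: "even_fps (fps_cosh s)"
  by (simp add: even_fps_def fps_cosh_nth)

lemma even_fps_sinhc [simp]: "even_fps (fps_sinhc s)"
  by (simp add: even_fps_def fps_sinhc_def)

lemma fps_sinhc_nth_0 [simp]: "fps_sinhc s $ 0 = 1"
  by (simp add: fps_sinhc_def)

lemma
  fixes s :: real
  shows inverse_fps_sinhc_nth_2: "inverse (fps_sinhc s) $ 2 = - (s ^ 2) / 6"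
    and inverse_fps_sinhc_nth_4: "inverse (fps_sinhc s) $ 4 = 7 * s ^ 4 / 360"
    and even_fps_inverse_sinhc [simp]: "even_fps (inverse (fps_sinhc s))"
proof -
  let ?f = "fps_sinhc s" and ?g = "inverse (fps_sinhc s)"
  have f2: "?f $ 2 = s ^ 2 / 6" and f4: "?f $ 4 = s ^ 4 / 120"
    by (simp_all add: fps_sinhc_def fact_numeral)
  have "?f * ?g = 1"
    by (simp add: inverse_mult_eq_1')
  then have fg2: "(?f * ?g) $ 2 = 0" and fg4: "(?f * ?g) $ 4 = 0"
    by simp_all
  from fg2 show g2: "?g $ 2 = - (s ^ 2) / 6"
    by (simp add: even_fps_mult_nth_2 f2)
  from fg4 show "?g $ 4 = 7 * s ^ 4 / 360"
    by (simp add: even_fps_mult_nth_4 f2 f4 g2)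
  show "even_fps ?g"
    by (simp add: even_fps_inverse)
qed

lemma
  fixes ys :: "real list"
  shows even_fps_Ahat [simp]: "even_fps (Ahat ys)"
    and Ahat_nth_0: "Ahat ys $ 0 = 1"
    and Ahat_nth_2: "Ahat ys $ 2 = - (\<Sum>y\<leftarrow>ys. y ^ 2) / 24"
    and Ahat_nth_4: "Ahat ys $ 4 = (2 * (\<Sum>y\<leftarrow>ys. y ^ 4) + 5 * (\<Sum>y\<leftarrow>ys. y ^ 2) ^ 2) / 5760"
proof (induction ys)
  case Nil
  show "even_fps (Ahat [])" "Ahat [] $ 0 = 1" "Ahat [] $ 2 = - (\<Sum>y\<leftarrow>[]. y ^ 2) / 24"
    "Ahat [] $ 4 = (2 * (\<Sum>y\<leftarrow>[]. y ^ 4) + 5 * (\<Sum>y\<leftarrow>[]. y ^ 2) ^ 2) / 5760"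
    by (simp_all add: Ahat_def even_fps_def)
next
  case (Cons y ys)
  have Ahat_Cons: "Ahat (y # ys) = inverse (fps_sinhc (y / 2)) * Ahat ys"
    by (simp add: Ahat_def)
  show "even_fps (Ahat (y # ys))" "Ahat (y # ys) $ 0 = 1"
    unfolding Ahat_Cons using Cons.IH by simp_all
  show "Ahat (y # ys) $ 2 = - (\<Sum>y\<leftarrow>y # ys. y ^ 2) / 24"
    unfolding Ahat_Cons using Cons.IH
    by (simp add: even_fps_mult_nth_2 inverse_fps_sinhc_nth_2 field_simps)
  show "Ahat (y # ys) $ 4 = (2 * (\<Sum>y\<leftarrow>y # ys. y ^ 4) + 5 * (\<Sum>y\<leftarrow>y # ys. y ^ 2) ^ 2) / 5760"
    unfolding Ahat_Cons using Cons.IH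
    by (simp add: even_fps_mult_nth_4 inverse_fps_sinhc_nth_2 inverse_fps_sinhc_nth_4 field_simps)
      algebra
qed

lemma cosh_cosh_Ahat_coeffs:
  fixes s t :: real and ys :: "real list"
  defines "p \<equiv> \<Sum>y\<leftarrow>ys. y ^ 2" and "q \<equiv> \<Sum>y\<leftarrow>ys. y ^ 4"
  shows "even_fps (2 * fps_cosh s * fps_cosh t * Ahat ys)"
    and "(2 * fps_cosh s * fps_cosh t * Ahat ys) $ 0 = 2"
    and "(2 * fps_cosh s * fps_cosh t * Ahat ys) $ 2 = s\<^sup>2 + t\<^sup>2 - p / 12"
    and "(2 * fps_cosh s * fps_cosh t * Ahat ys) $ 4 =
      (s ^ 4 + t ^ 4) / 12 + s\<^sup>2 * t\<^sup>2 / 2 - (s\<^sup>2 + t\<^sup>2) * p / 24 + (2 * q + 5 * p\<^sup>2) / 2880"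
  unfolding p_def q_def
  by (simp_all add: even_fps_mult_nth_2 even_fps_mult_nth_4 fps_cosh_nth Ahat_nth_0 Ahat_nth_2
      Ahat_nth_4) (simp_all add: field_simps fact_numeral)

lemma p1_TM_minus_p1_xiR:
  "p1_TM ys - of_int k * p1_xiR c = fps_const ((\<Sum>y\<leftarrow>ys. y ^ 2) - of_int k * c ^ 2) * fps_X ^ 2"
  by (simp add: p1_TM_def p1_xiR_def fps_eq_iff flip: fps_of_int)

theorem theorem4p3:
  fixes y :: "real list" and c cb :: real and a b :: int
  assumes dim8: "length y = 4"
  shows "let chA = ch_roots (roots_xiR a c);
             chB = ch_roots (roots_xiR b c);
             chE = ch_roots (roots_etaC cb);
             X = p1_TM y - of_int (a ^ 2 + 2 * b ^ 2) * p1_xiR c;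
             Psi = 2 * fps_cosh (of_int b / 2 * c) * fps_cosh (1 / 2 * cb) * Ahat y;
             chB0 = 1;
             chB1 = - chA + chB + 3 * chE - 6;
             chB2 = ch_wedge2 (roots_xiR a c) + ch_wedge2 (roots_xiR b c) - chA * chB
                  - 3 * chA * chE + 3 * chB * chE + 4 * chE * chE
                  + ch_sym2 (roots_etaC cb) + ch_roots (roots_TCM y)
                  + 6 * chA - 5 * chB - 17 * chE + 7
         in X_deg4_expX1_over_X X (Psi * (240 * chB0 + 8 * chB1 - chB2))
              + X * form_deg (fps_expX24 X * Psi * chB0) 4
            = form_deg (Psi * (240 * chB0 + 8 * chB1 - chB2)) 8"
proof -
  define p where "p = (\<Sum>v\<leftarrow>y. v ^ 2)"
  define q where "q = (\<Sum>v\<leftarrow>y. v ^ 4)"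
  define x where "x = p - of_int (a ^ 2 + 2 * b ^ 2) * c ^ 2"
  define Psi where "Psi = 2 * fps_cosh (of_int b / 2 * c) * fps_cosh (1 / 2 * cb) * Ahat y"
  note Psi_coeffs =
    cosh_cosh_Ahat_coeffs[of "of_int b / 2 * c" "1 / 2 * cb" y, folded Psi_def p_def q_def]
  define V where "V = ch_virtual_bundle (of_int a * c) (of_int b * c) cb (ch_roots (roots_TCM y))"
  have ch_TCM_coeffs: "ch_roots (roots_TCM y) $ 0 = 8" "ch_roots (roots_TCM y) $ 2 = p"
    "ch_roots (roots_TCM y) $ 4 = q / 12"
    by (simp_all add: ch_roots_roots_TCM_nth sum_list_triv dim8 p_def q_def fact_numeral)
  have "2 * (Psi * V) $ 4 + x * ((Psi * V) $ 2 / 24 + x * (Psi * V) $ 0 / 1152)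
      + x * (Psi $ 2 + x * Psi $ 0 / 24) = (Psi * V) $ 4"
    unfolding even_fps_mult_nth_2[OF Psi_coeffs(1)] even_fps_mult_nth_4[OF Psi_coeffs(1)]
      fps_mult_nth_0 Psi_coeffs(2-4) V_def ch_virtual_bundle_nth_0 ch_virtual_bundle_nth_2
      ch_virtual_bundle_nth_4 ch_TCM_coeffs x_def
    by (simp add: field_simps) algebra
  then show ?thesis
    unfolding Let_def ch_roots_roots_xiR ch_roots_roots_etaC ch_wedge2_roots_xiR ch_sym2_roots_etaC
      ch_virtual_bundle_def[symmetric] V_def[symmetric] Psi_def[symmetric]
      p1_TM_minus_p1_xiR p_def[symmetric] x_def[symmetric]
    unfolding X_deg4_expX1_over_X_monomial mult_1_right monomial_mult_form_deg_4_expX24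
    by (simp only: form_deg_def even_numeral if_True) (simp add: fps_eq_iff)
qed

end
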